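(* Fix integers $N\ge 2$ and $K\ge 1$. The class $M^{\text{RESCAL}}_N$ is universal, i.e. $\pi(\mathcal{M}^{\text{RESCAL}}_N)=\pi(\mathbb{R}^{N\times N\times K})$.
   Context: There are $N$ entities and $K$ relations. A score-based model assigns a score $s_k(i,j)\in\mathbb{R}$ to each triple, $i,j\in\{1,\dots,N\}$, $k\in\{1,\dots,K\}$; its scoring tensor $\mathcal{S}\in\mathbb{R}^{N\times N\times K}$ has frontal slices $\mathbf{S}_k$ with $[\mathbf{S}_k]_{ij}=s_k(i,j)$. For a real $N\times N$ matrix $\mathbf{S}$, $\pi(\mathbf{S})$ is the matrix of dense ranks: $\pi_{ij}(\mathbf{S})=1+$ (number of distinct values among entries of $\mathbf{S}$ strictly larger than $s_{ij}$). For tensors, $\pi$ acts slicewise; for a set $X$, $\pi(X)=\{\pi(x):x\in X\}$. RESCAL of size $r$: parameters $\mathbf{A}\in\mathbb{R}^{N\times r}$ (rows $\mathbf{a}_i$), $\mathbf{R}_1,\dots,\mathbf{R}_K\in\mathbb{R}^{r\times r}$, score $\mathbf{a}_i^T\mathbf{R}_k\mathbf{a}_j$; $\mathcal{M}^{\text{RESCAL}}_r$ is the set of scoring tensors of all such models. *)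

theory Defs
  imports Complex_Main
begin

text \<open>Entities are indexed by a finite type 'n (N = CARD('n)), relations by a
finite type 'k (K = CARD('k) \<ge> 1 automatically). A scoring tensor is a function
T i j k = s_k(i,j).\<close>

type_synonym ('n, 'k) tensor = "'n \<Rightarrow> 'n \<Rightarrow> 'k \<Rightarrow> real"

definition dense_rank :: "('n \<Rightarrow> 'n \<Rightarrow> real) \<Rightarrow> 'n \<Rightarrow> 'n \<Rightarrow> nat" where
  "dense_rank S i j = 1 + card {v. (\<exists>a b. v = S a b) \<and> S i j < v}"

definition tensor_rank :: "('n, 'k) tensor \<Rightarrow> 'n \<Rightarrow> 'n \<Rightarrow> 'k \<Rightarrow> nat" where
  "tensor_rank T = (\<lambda>i j k. dense_rank (\<lambda>a b. T a b k) i j)"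

text \<open>RESCAL of size r = CARD('r): A has rows a_i \<in> R^r, R_k \<in> R^{r\<times>r},
score a_i^T R_k a_j.\<close>
definition rescal_score :: "('n \<Rightarrow> 'r::finite \<Rightarrow> real) \<Rightarrow> ('k \<Rightarrow> 'r \<Rightarrow> 'r \<Rightarrow> real) \<Rightarrow> ('n, 'k) tensor" where
  "rescal_score A R = (\<lambda>i j k. \<Sum>p\<in>UNIV. \<Sum>q\<in>UNIV. A i p * R k p q * A j q)"

definition rescal_models :: "'r::finite itself \<Rightarrow> ('n, 'k) tensor set" where
  "rescal_models _ = {T. \<exists>(A :: 'n \<Rightarrow> 'r \<Rightarrow> real) R. T = rescal_score A R}"

end

theory Submission
  imports Defs
begin

text \<open>With the identity embedding A = I of size N, the RESCAL score a_i^T R_k a_j is the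
entry (i,j) of R_k, so taking R_k to be the k-th frontal slice reproduces any tensor.
Thus the scoring tensors themselves, not only their rank patterns, exhaust all tensors.\<close>

lemma rescal_score_identity:
  "rescal_score (\<lambda>i p. of_bool (i = p)) (\<lambda>k p q. T p q k) = T"
proof (intro ext)
  fix i j k
  have "(\<Sum>p\<in>UNIV. \<Sum>q\<in>UNIV. of_bool (i = p) * T p q k * of_bool (j = q))
      = (\<Sum>p\<in>UNIV. of_bool (i = p) * (\<Sum>q\<in>UNIV. of_bool (j = q) * T p q k))"
    by (simp only: sum_distrib_left mult_ac)
  also have "\<dots> = (\<Sum>p\<in>UNIV. of_bool (i = p) * T p j k)"
    by simp
  also have "\<dots> = T i j k"
    by simp
  finally show "rescal_score (\<lambda>i p. of_bool (i = p)) (\<lambda>k p q. T p q k) i j k = T i j k"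
    by (simp add: rescal_score_def)
qed

lemma rescal_models_size_card_eq_UNIV:
  "rescal_models TYPE('n::finite) = (UNIV :: ('n, 'k) tensor set)"
  unfolding rescal_models_def by (metis (mono_tags) UNIV_eq_I mem_Collect_eq rescal_score_identity)

theorem theorem5:
  assumes "card (UNIV :: 'n::finite set) \<ge> 2"
  shows "tensor_rank ` (rescal_models TYPE('n) :: ('n, 'k::finite) tensor set)
         = tensor_rank ` (UNIV :: ('n, 'k) tensor set)"
  by (simp add: rescal_models_size_card_eq_UNIV)

end
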